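(* Let $\mathbf{J}\in\mathbb{R}^{n\times n}$ be a real symmetric matrix with zero diagonal, and let $\alpha,\beta>0$ be such that $\lambda_{\min}(\mathbf{J}+\alpha\mathbf{I})>0$. Let $\{\boldsymbol{x}^{(k)}\}_{k\ge0}$ be the DOCH iterates starting from an arbitrary $\boldsymbol{x}^{(0)}\in\mathbb{R}^n$. Then every limit point $\boldsymbol{x}^*$ of $\{\boldsymbol{x}^{(k)}\}$ is a critical point of $\mathcal{H}$, i.e. $\nabla\mathcal{H}(\boldsymbol{x}^* )=\mathbf{0}$.
   Context: Let $f(\boldsymbol{x})=\frac{\beta}{4}\sum_i x_i^4$, $g(\boldsymbol{x})=\frac12\boldsymbol{x}^\top(\mathbf{J}+\alpha\mathbf{I})\boldsymbol{x}$ and $\mathcal{H}=f-g$ (equivalently $\mathcal{H}(\boldsymbol{x})=\frac{\beta}{4}\sum_i x_i^4-\frac{\alpha}{2}\sum_i x_i^2-\frac12\boldsymbol{x}^\top\mathbf{J}\boldsymbol{x}$). The DOCH iterates are defined by $\boldsymbol{x}^{(k+1)}$ being the minimizer of $F_k(\boldsymbol{x})=f(\boldsymbol{x})-g(\boldsymbol{x}^{(k)})-\nabla g(\boldsymbol{x}^{(k)})^\top(\boldsymbol{x}-\boldsymbol{x}^{(k)})$; explicitly, $\boldsymbol{x}^{(k+1)}=\varphi(\beta^{-1}(\mathbf{J}+\alpha\mathbf{I})\boldsymbol{x}^{(k)})$ with $\varphi$ the componentwise real cube root. *)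

theory Defs
  imports "HOL-Analysis.Analysis"
begin

definition lambda_min :: "real^'n^'n \<Rightarrow> real" where
  "lambda_min A = Inf {l. \<exists>v. v \<noteq> 0 \<and> A *v v = l *\<^sub>R v}"

definition H_obj :: "real^'n^'n \<Rightarrow> real \<Rightarrow> real \<Rightarrow> real^'n \<Rightarrow> real" where
  "H_obj J alpha beta x =
     beta / 4 * (\<Sum>i\<in>UNIV. (x $ i) ^ 4) - alpha / 2 * (\<Sum>i\<in>UNIV. (x $ i) ^ 2)
     - 1/2 * (x \<bullet> (J *v x))"

text \<open>DOCH iterates: x(k+1) = phi(beta^{-1} (J + alpha I) x(k)), phi = componentwise
real cube root (root 3 is the odd real root, sign preserving).\<close>
fun doch :: "real^'n^'n \<Rightarrow> real \<Rightarrow> real \<Rightarrow> real^'n \<Rightarrow> nat \<Rightarrow> real^'n" where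
  "doch J alpha beta x0 0 = x0"
| "doch J alpha beta x0 (Suc k) =
     (\<chi> i. root 3 ((((J + alpha *\<^sub>R mat 1) *v doch J alpha beta x0 k) $ i) / beta))"

end

theory Submission imports Defs begin

text \<open>Write \<open>A = J + \<alpha>I\<close> and \<open>T\<close> for the DOCH map, so that \<open>y = T x\<close> solves
\<open>\<beta> y\<^sub>i\<^sup>3 = (A x)\<^sub>i\<close>. Expanding \<open>H\<close> around \<open>y\<close> gives the exact descent identity
\<open>H x - H y = (y - x)\<bullet>A(y - x)/2 + \<beta> \<Sum>\<^sub>i D(x\<^sub>i, y\<^sub>i)\<close>, where
\<open>D(a, b) = a\<^sup>4/4 - b\<^sup>4/4 - b\<^sup>3(a - b)\<close> is the Bregman distance of \<open>t\<^sup>4/4\<close>. By the Rayleigh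
quotient argument, \<open>\<lambda>\<^sub>m\<^sub>i\<^sub>n(A) > 0\<close> makes \<open>A\<close> positive semidefinite, and \<open>D \<ge> 0\<close> vanishes only
on the diagonal; hence \<open>H\<close> decreases along \<open>T\<close>, strictly off the fixed points of \<open>T\<close>.
\<open>H\<close> is therefore monotone along the iterates, and continuity of \<open>H\<close> and \<open>T\<close> at a limit
point \<open>x\<^sup>*\<close> forces \<open>H (T x\<^sup>*) = H x\<^sup>*\<close>, i.e. \<open>T x\<^sup>* = x\<^sup>*\<close>. Fixed points of \<open>T\<close> are exactly the
zeros of \<open>\<nabla>H x = \<beta> x\<^sup>3 - A x\<close>.\<close>

lemma limit_point_of_descent_iteration_is_fixed_point:
  fixes T :: "'a::topological_space \<Rightarrow> 'a" and V :: "'a \<Rightarrow> real"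
  assumes "continuous_on UNIV T" and "continuous_on UNIV V"
    and descent: "\<And>x. V (T x) \<le> V x"
    and strict: "\<And>x. V (T x) = V x \<Longrightarrow> T x = x"
    and iter: "\<And>k. X (Suc k) = T (X k)"
    and "strict_mono r" and lim: "(X \<circ> r) \<longlonglongrightarrow> x"
  shows "T x = x"
proof (rule strict)
  have dec: "decseq (\<lambda>k. V (X k))"
    by (rule decseq_SucI) (simp add: iter descent)
  have "(\<lambda>k. V (X (r (Suc k)))) \<longlonglongrightarrow> V x"
    using continuous_on_tendsto_compose[OF assms(2) LIMSEQ_Suc[OF lim]] by (simp add: o_def)
  moreover have "(\<lambda>k. V (X (Suc (r k)))) \<longlonglongrightarrow> V (T x)"
    using continuous_on_tendsto_compose[OF assms(2) continuous_on_tendsto_compose[OF assms(1) lim]]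
    by (simp add: o_def iter)
  moreover have "V (X (r (Suc k))) \<le> V (X (Suc (r k)))" for k
    using decseqD[OF dec] \<open>strict_mono r\<close> by (simp add: Suc_le_eq strict_mono_less)
  ultimately have "V x \<le> V (T x)"
    by (blast intro: LIMSEQ_le)
  with descent show "V (T x) = V x"
    by (simp add: order_antisym)
qed

lemma symmetric_matrix_inner_commute:
  fixes A :: "real^'n^'n"
  assumes "transpose A = A"
  shows "x \<bullet> (A *v y) = y \<bullet> (A *v x)"
  by (metis assms dot_lmul_matrix inner_commute vector_transpose_matrix)

lemma quadratic_nonneg_imp_linear_coeff_zero:
  fixes a b :: real
  assumes "\<And>t. 0 \<le> 2 * t * a + t\<^sup>2 * b"
  shows "a = 0"
proof (rule ccontr)
  assume "a \<noteq> 0"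
  have "b \<ge> 0"
    using assms[of 1] assms[of "-1"] by simp
  define t where "t = - a / (b + 1)"
  have "t * (b + 1) = - a"
    using \<open>b \<ge> 0\<close> by (simp add: t_def)
  have "(b + 1)\<^sup>2 * (2 * t * a + t\<^sup>2 * b) = 2 * a * (t * (b + 1)) * (b + 1) + (t * (b + 1))\<^sup>2 * b"
    by algebra
  also have "\<dots> = - (a\<^sup>2 * (b + 2))"
    unfolding \<open>t * (b + 1) = - a\<close> by algebra
  finally have "(b + 1)\<^sup>2 * (2 * t * a + t\<^sup>2 * b) = - (a\<^sup>2 * (b + 2))" .
  moreover have "a\<^sup>2 * (b + 2) > 0"
    using \<open>a \<noteq> 0\<close> \<open>b \<ge> 0\<close> by simp
  ultimately show False
    using assms[of t] by (smt (verit) zero_le_power2 mult_nonneg_nonneg)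
qed

lemma positive_semidefinite_null_vector:
  fixes B :: "real^'n^'n"
  assumes "transpose B = B" and psd: "\<And>u. u \<bullet> (B *v u) \<ge> 0" and "v \<bullet> (B *v v) = 0"
  shows "B *v v = 0"
proof -
  have "w \<bullet> (B *v v) = 0" for w
  proof (rule quadratic_nonneg_imp_linear_coeff_zero)
    fix t
    have "(v + t *\<^sub>R w) \<bullet> (B *v (v + t *\<^sub>R w)) = 2 * t * (w \<bullet> (B *v v)) + t\<^sup>2 * (w \<bullet> (B *v w))"
      using symmetric_matrix_inner_commute[OF assms(1), of v w] assms(3)
      by (simp add: matrix_vector_right_distrib matrix_vector_mult_scaleR inner_add_left
          inner_add_right power2_eq_square algebra_simps)
    then show "0 \<le> 2 * t * (w \<bullet> (B *v v)) + t\<^sup>2 * (w \<bullet> (B *v w))"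
      using psd by metis
  qed
  from this[of "B *v v"] show ?thesis by simp
qed

text \<open>The minimiser of the Rayleigh quotient on the unit sphere is an eigenvector.\<close>

lemma symmetric_matrix_min_eigenpair:
  fixes A :: "real^'n^'n"
  assumes "transpose A = A"
  obtains v m where "v \<noteq> 0" and "A *v v = m *\<^sub>R v" and "\<And>u. m * (u \<bullet> u) \<le> u \<bullet> (A *v u)"
proof -
  define q where "q u = u \<bullet> (A *v u)" for u :: "real^'n"
  have "continuous_on (sphere 0 1) q"
    unfolding q_def by (intro continuous_intros)
  moreover have "sphere (0::real^'n) 1 \<noteq> {}"
    by (metis empty_iff mem_sphere_0 norm_axis_1)
  ultimately obtain v where v: "v \<in> sphere 0 1" and min: "\<And>u. u \<in> sphere 0 1 \<Longrightarrow> q v \<le> q u"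
    using continuous_attains_inf[OF compact_sphere] by blast
  define m where "m = q v"
  have lower: "m * (u \<bullet> u) \<le> q u" for u
  proof (cases "u = 0")
    case False
    define w where "w = (1 / norm u) *\<^sub>R u"
    have "m \<le> q w"
      using False min[of w] by (simp add: m_def w_def)
    moreover have "q u = (norm u)\<^sup>2 * q w"
      using False by (simp add: q_def w_def matrix_vector_mult_scaleR power2_eq_square)
    moreover have "u \<bullet> u = (norm u)\<^sup>2"
      by (simp add: power2_norm_eq_inner)
    ultimately show ?thesis
      by (metis mult.commute mult_right_mono zero_le_power2)
  qed (simp add: q_def)
  define B where "B = A - m *\<^sub>R mat 1"
  have B_apply: "B *v u = A *v u - m *\<^sub>R u" for u
    by (simp add: B_def matrix_vector_mult_diff_rdistrib flip: scaleR_matrix_vector_assoc)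
  have "B *v v = 0"
  proof (rule positive_semidefinite_null_vector)
    show "transpose B = B"
      using assms by (simp add: B_def transpose_def vec_eq_iff mat_def)
    show "0 \<le> u \<bullet> (B *v u)" for u
      using lower[of u] by (simp add: B_apply q_def inner_diff_right)
    show "v \<bullet> (B *v v) = 0"
      using v by (simp add: B_apply q_def m_def inner_diff_right norm_eq_1)
  qed
  then have "A *v v = m *\<^sub>R v"
    by (simp add: B_apply)
  moreover have "v \<noteq> 0"
    using v by auto
  ultimately show thesis
    using that lower by (simp add: q_def)
qed

lemma lambda_min_le_quadratic_form:
  fixes A :: "real^'n^'n"
  assumes "transpose A = A"
  shows "lambda_min A * (x \<bullet> x) \<le> x \<bullet> (A *v x)"
proof -
  obtain v m where "v \<noteq> 0" "A *v v = m *\<^sub>R v" and lower: "\<And>u. m * (u \<bullet> u) \<le> u \<bullet> (A *v u)"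
    using symmetric_matrix_min_eigenpair[OF assms] by blast
  define E where "E = {l. \<exists>v. v \<noteq> 0 \<and> A *v v = l *\<^sub>R v}"
  have "m \<in> E"
    using \<open>v \<noteq> 0\<close> \<open>A *v v = m *\<^sub>R v\<close> by (auto simp: E_def)
  moreover have "m \<le> l" if l: "l \<in> E" for l
  proof -
    obtain u where "u \<noteq> 0" "A *v u = l *\<^sub>R u"
      using l by (auto simp: E_def)
    then show ?thesis
      using lower[of u] by simp
  qed
  ultimately have "lambda_min A = m"
    unfolding lambda_min_def E_def[symmetric] by (intro cInf_eq_minimum)
  then show ?thesis
    using lower by simp
qed

definition quartic_bregman :: "real \<Rightarrow> real \<Rightarrow> real" where
  "quartic_bregman a b = a ^ 4 / 4 - b ^ 4 / 4 - b ^ 3 * (a - b)"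

lemma quartic_bregman_eq: "quartic_bregman a b = (a - b)\<^sup>2 * ((a + b)\<^sup>2 + 2 * b\<^sup>2) / 4"
  unfolding quartic_bregman_def by algebra

lemma quartic_bregman_nonneg: "quartic_bregman a b \<ge> 0"
  unfolding quartic_bregman_eq by simp

lemma quartic_bregman_eq_0_iff: "quartic_bregman a b = 0 \<longleftrightarrow> a = b"
proof
  assume "quartic_bregman a b = 0"
  then have "(a - b)\<^sup>2 = 0 \<or> (a + b)\<^sup>2 + 2 * b\<^sup>2 = 0"
    unfolding quartic_bregman_eq by simp
  then show "a = b"
    by (auto simp: add_nonneg_eq_0_iff)
qed (simp add: quartic_bregman_def)

definition quartic_dc_objective :: "real^'n^'n \<Rightarrow> real \<Rightarrow> real^'n \<Rightarrow> real" where
  "quartic_dc_objective A beta x = beta / 4 * (\<Sum>i\<in>UNIV. (x $ i) ^ 4) - 1/2 * (x \<bullet> (A *v x))"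

definition quartic_dc_step :: "real^'n^'n \<Rightarrow> real \<Rightarrow> real^'n \<Rightarrow> real^'n" where
  "quartic_dc_step A beta x = (\<chi> i. root 3 ((A *v x) $ i / beta))"

lemma shifted_matrix_vector_mult: "(J + alpha *\<^sub>R mat 1) *v x = J *v x + alpha *\<^sub>R (x::real^'n)"
  by (simp add: matrix_vector_mult_add_rdistrib flip: scaleR_matrix_vector_assoc)

lemma H_obj_eq_quartic_dc_objective:
  "H_obj J alpha beta = quartic_dc_objective (J + alpha *\<^sub>R mat 1) beta"
proof
  fix x
  show "H_obj J alpha beta x = quartic_dc_objective (J + alpha *\<^sub>R mat 1) beta x"
    unfolding H_obj_def quartic_dc_objective_def shifted_matrix_vector_mult
    by (simp add: inner_add_right inner_vec_def power2_eq_square algebra_simps sum_distrib_left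
        sum.distrib)
qed

lemma doch_Suc_eq_quartic_dc_step:
  "doch J alpha beta x0 (Suc k) = quartic_dc_step (J + alpha *\<^sub>R mat 1) beta (doch J alpha beta x0 k)"
  by (simp add: quartic_dc_step_def)

lemma quartic_dc_step_cube:
  assumes "beta \<noteq> 0"
  shows "beta * (quartic_dc_step A beta x $ i) ^ 3 = (A *v x) $ i"
  using assms by (simp add: quartic_dc_step_def odd_real_root_pow)

lemma continuous_on_quartic_dc_objective: "continuous_on UNIV (quartic_dc_objective A beta)"
  unfolding quartic_dc_objective_def by (intro continuous_intros)

lemma continuous_on_quartic_dc_step: "continuous_on UNIV (quartic_dc_step A beta)"
  unfolding quartic_dc_step_def divide_inverse by (intro continuous_intros)

lemma quartic_dc_objective_has_derivative:
  fixes A :: "real^'n^'n"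
  assumes "transpose A = A"
  shows "(quartic_dc_objective A beta has_derivative
           (\<lambda>h. h \<bullet> ((\<chi> i. beta * (x $ i) ^ 3) - A *v x))) (at x)"
proof -
  have A_linear: "bounded_linear ((*v) A)"
    by (simp add: linear_conv_bounded_linear[symmetric])
  show ?thesis
    unfolding quartic_dc_objective_def [abs_def]
    apply (rule derivative_eq_intros bounded_linear.has_derivative[OF bounded_linear_vec_nth]
        bounded_linear.has_derivative[OF A_linear] has_derivative_ident refl)+
    apply (simp add: fun_eq_iff symmetric_matrix_inner_commute[OF assms, of x] inner_diff_right)
    apply (simp add: inner_vec_def sum_distrib_left algebra_simps)
    done
qed

text \<open>The hypothesis on \<open>y\<close> says that \<open>y\<close> minimises the convex majorant \<open>F\<^sub>k\<close> built at \<open>x\<close>.\<close>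

lemma quartic_dc_descent_identity:
  fixes A :: "real^'n^'n"
  assumes "transpose A = A" and cube: "\<And>i. beta * (y $ i) ^ 3 = (A *v x) $ i"
  shows "quartic_dc_objective A beta x - quartic_dc_objective A beta y =
           1/2 * ((y - x) \<bullet> (A *v (y - x))) + beta * (\<Sum>i\<in>UNIV. quartic_bregman (x $ i) (y $ i))"
proof -
  define d where "d = y - x"
  have "y = x + d"
    by (simp add: d_def)
  then have "y \<bullet> (A *v y) = x \<bullet> (A *v x) + 2 * (d \<bullet> (A *v x)) + d \<bullet> (A *v d)"
    using symmetric_matrix_inner_commute[OF assms(1), of x d]
    by (simp add: matrix_vector_right_distrib inner_add_left inner_add_right)
  moreover have "d \<bullet> (A *v x) = (\<Sum>i\<in>UNIV. (y $ i - x $ i) * (beta * (y $ i) ^ 3))"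
    by (simp add: inner_vec_def cube d_def)
  moreover have "beta * (\<Sum>i\<in>UNIV. quartic_bregman (x $ i) (y $ i)) =
      beta / 4 * (\<Sum>i\<in>UNIV. (x $ i) ^ 4) - beta / 4 * (\<Sum>i\<in>UNIV. (y $ i) ^ 4)
      + (\<Sum>i\<in>UNIV. (y $ i - x $ i) * (beta * (y $ i) ^ 3))"
    unfolding quartic_bregman_def
    by (simp add: sum_distrib_left sum_subtractf sum.distrib algebra_simps sum_divide_distrib)
  ultimately show ?thesis
    unfolding quartic_dc_objective_def d_def[symmetric] by (simp add: algebra_simps)
qed

lemma quartic_dc_step_descent:
  fixes A :: "real^'n^'n"
  assumes "transpose A = A" and "beta > 0" and psd: "\<And>v. v \<bullet> (A *v v) \<ge> 0"
  defines "V \<equiv> quartic_dc_objective A beta" and "T \<equiv> quartic_dc_step A beta"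
  shows "V (T x) \<le> V x" and "V (T x) = V x \<Longrightarrow> T x = x"
proof -
  define S where "S = (\<Sum>i\<in>UNIV. quartic_bregman (x $ i) (T x $ i))"
  have "V x - V (T x) = 1/2 * ((T x - x) \<bullet> (A *v (T x - x))) + beta * S"
    unfolding V_def T_def S_def
    using assms(1,2) by (intro quartic_dc_descent_identity quartic_dc_step_cube) simp_all
  moreover have "S \<ge> 0"
    unfolding S_def by (intro sum_nonneg quartic_bregman_nonneg)
  ultimately have gap: "V x - V (T x) \<ge> beta * S" "beta * S \<ge> 0"
    using psd[of "T x - x"] \<open>beta > 0\<close> by simp_all
  then show "V (T x) \<le> V x"
    by linarith
  assume "V (T x) = V x"
  then have "S = 0"
    using gap \<open>beta > 0\<close> by (simp add: zero_le_mult_iff)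
  then have "quartic_bregman (x $ i) (T x $ i) = 0" for i
    unfolding S_def by (subst (asm) sum_nonneg_eq_0_iff) (simp_all add: quartic_bregman_nonneg)
  then show "T x = x"
    by (simp add: vec_eq_iff quartic_bregman_eq_0_iff)
qed

lemma quartic_dc_step_fixed_point_critical:
  fixes A :: "real^'n^'n"
  assumes "transpose A = A" and "beta \<noteq> 0" and "quartic_dc_step A beta x = x"
  shows "(quartic_dc_objective A beta has_derivative (\<lambda>h. 0)) (at x)"
proof -
  have "(\<chi> i. beta * (x $ i) ^ 3) = A *v x"
    using quartic_dc_step_cube[OF assms(2), of A x] assms(3) by (simp add: vec_eq_iff)
  then show ?thesis
    using quartic_dc_objective_has_derivative[OF assms(1), of beta x] by simp
qed

theorem propositionS8:
  fixes J :: "real^'n^'n" and alpha beta :: real and x0 xstar :: "real^'n"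
  assumes "transpose J = J"
    and "\<forall>i. J $ i $ i = 0"
    and "alpha > 0" and "beta > 0"
    and "lambda_min (J + alpha *\<^sub>R mat 1) > 0"
    and "\<exists>r. strict_mono r \<and> ((doch J alpha beta x0 \<circ> r) \<longlonglongrightarrow> xstar)"
  shows "(H_obj J alpha beta has_derivative (\<lambda>h. 0)) (at xstar)"
proof -
  define A where "A = J + alpha *\<^sub>R mat 1"
  have A_symmetric: "transpose A = A"
    using assms(1) by (simp add: A_def transpose_def vec_eq_iff mat_def)
  have psd: "v \<bullet> (A *v v) \<ge> 0" for v
    using lambda_min_le_quadratic_form[OF A_symmetric, of v] assms(5)[folded A_def]
    by (smt (verit) inner_ge_zero mult_nonneg_nonneg)
  obtain r where "strict_mono r" "(doch J alpha beta x0 \<circ> r) \<longlonglongrightarrow> xstar"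
    using assms(6) by blast
  with continuous_on_quartic_dc_step continuous_on_quartic_dc_objective
    quartic_dc_step_descent[OF A_symmetric \<open>beta > 0\<close> psd]
    doch_Suc_eq_quartic_dc_step[of J alpha beta x0, folded A_def]
  have "quartic_dc_step A beta xstar = xstar"
    by (rule limit_point_of_descent_iteration_is_fixed_point)
  then show ?thesis
    unfolding H_obj_eq_quartic_dc_objective A_def[symmetric]
    using A_symmetric \<open>beta > 0\<close> by (intro quartic_dc_step_fixed_point_critical) simp_all
qed

end
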